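(* Let $y_D$ be a real random variable with continuous cumulative distribution function $F$, and let $\gamma\in(0,1)\cap\mathbb{Q}$ with irreducible fraction $\gamma=\frac{n_1}{n_2}$. Let $\epsilon\in(0,1)$ and $\rho\in(0,1)$ satisfy $4\gamma(1-\gamma)>9\rho\epsilon^2$ and $6\rho\le 1$. Set $$k=\left\lceil \frac{1}{n_2}\left(\frac{4\gamma(1-\gamma)}{9\rho\epsilon^2}-1\right)\right\rceil,\qquad N=kn_2-1 .$$ Let $y_{D,1},\dots,y_{D,N}$ be i.i.d. copies of $y_D$ with order statistics $y_{D,(1)}\le\dots\le y_{D,(N)}$, and let $\tilde J_D=y_{D,(\lfloor N\gamma\rfloor+1)}$. Then $$\mathrm{prob}\{|F(\tilde J_D)-\gamma|\le\epsilon\}\ge 1-\rho .$$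
   Context: For a finite sample $\{x_i\}_{i=1}^N$, the order statistics $x_{(1)}\le x_{(2)}\le\dots\le x_{(N)}$ are the sample values sorted increasingly. The irreducible fraction of a rational $\gamma$ is $\gamma=n_1/n_2$ with $n_1,n_2$ coprime positive integers. Known facts that may be used: if $y_{D,(m)}$ is the $m$th order statistic of $N$ i.i.d. samples with continuous CDF $F$, then $F(y_{D,(m)})\sim\mathrm{Beta}(m,N+1-m)$ (which is unimodal for $1\le m\le N$); and the Vysochanskij–Petunin inequality: for a unimodal random variable $X$ with finite mean and variance, $\mathrm{prob}\{|X-\mathbb E X|\ge \epsilon\}\le \frac{4\mathrm{Var}X}{9\epsilon^2}$ whenever $3\epsilon^2\ge 8\,\mathrm{Var}X$. *)

theory Defs
  imports "HOL-Probability.Probability"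
begin

definition order_stat :: "(nat \<Rightarrow> real) \<Rightarrow> nat \<Rightarrow> nat \<Rightarrow> real" where
  "order_stat x N m = sort (map x [1..<N+1]) ! (m - 1)"

end

theory Submission
  imports Defs
begin

text \<open>With m = floor (N \<gamma>) + 1 the choice of N makes \<gamma> = m / (N + 1) exactly, and
  F applied to the m-th order statistic of the sample is the m-th order statistic of N independent
  uniform variables. Its law is Beta(m, N + 1 - m), with distribution function
  t \<mapsto> P(Binomial(N, t) \<ge> m), mean \<gamma> and variance \<sigma>^2 = \<gamma> (1 - \<gamma>) / (N + 2); the choice of k
  gives \<sigma>^2 \<le> (9/4) \<rho> \<epsilon>^2 \<le> (3/8) \<epsilon>^2.

  The Vysochanskij-Petunin bound is proved directly for this unimodal density g with mode \<nu>:
  if the primitive Q of a quadratic q satisfies Q t - Q \<nu> \<ge> (t - \<gamma> - \<epsilon>)^+ right of \<nu> and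
  symmetrically on the left, integrating q g by parts against the monotone pieces of g shows that
  the mass of g outside [\<gamma> - \<epsilon>, \<gamma> + \<epsilon>] is at most the integral of q g. Since the mode of a
  Beta law lies within \<surd>(2 \<sigma>^2) of its mean, a quadratic with coefficients depending on
  (\<nu> - \<gamma>) / \<epsilon> does the job and has integral at most (4/9) \<sigma>^2 / \<epsilon>^2 \<le> \<rho>.\<close>

section \<open>Quadratic majorants\<close>

lemma cubic_nonneg_of_discriminant:
  fixes a b K x :: real
  assumes "0 < a" "0 \<le> b" "0 \<le> K" "4 * b^3 \<le> 9 * a * K^2" "0 \<le> x"
  shows "0 \<le> a * x^3 / 3 - b * x + K"
proof -
  define x0 where "x0 = sqrt (b / a)"
  have x0: "0 \<le> x0" "x0^2 = b / a" using assms by (auto simp: x0_def)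
  have b: "b = a * x0^2" using x0 assms by (simp add: field_simps)
  have "a * x^3 / 3 - b * x + 2/3 * b * x0 = a/3 * (x - x0)^2 * (x + 2 * x0)"
    unfolding b by (simp add: algebra_simps power2_eq_square power3_eq_cube divide_simps)
  moreover have "0 \<le> a/3 * (x - x0)^2 * (x + 2 * x0)"
    using assms x0 by (intro mult_nonneg_nonneg) auto
  moreover have "(2/3 * b * x0)^2 \<le> K^2"
  proof -
    have "(2/3 * b * x0)^2 = 4 * b^3 / (9 * a)"
      using x0 assms by (simp add: power_mult_distrib field_simps power2_eq_square power3_eq_cube)
    also have "\<dots> \<le> K^2" using assms by (simp add: field_simps)
    finally show ?thesis .
  qed
  then have "2/3 * b * x0 \<le> K" using assms(3) power2_le_imp_le by blast
  ultimately show ?thesis by linarith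
qed

text \<open>The quadratic majorant q_v(x) = maj_coeff v * x^2 + maj_const v and its primitive, on the
  scale where the central interval is [-1, 1] and the mode of the density sits at v. Since
  maj_const v = -(3/8) (maj_coeff v - 4/9), the mean of q_v under a law of mean 0 and variance s
  is (4/9) s + (29/100) v^2 (s - 3/8), at most (4/9) s when s is at most 3/8.\<close>
definition maj_coeff :: "real \<Rightarrow> real" where
  "maj_coeff v = 4/9 + 29/100 * v^2"

definition maj_const :: "real \<Rightarrow> real" where
  "maj_const v = -3/8 * (29/100 * v^2)"

definition maj_prim :: "real \<Rightarrow> real \<Rightarrow> real" where
  "maj_prim v x = maj_coeff v * x^3 / 3 + maj_const v * x"

definition maj_discr_poly :: "real \<Rightarrow> real" where
  "maj_discr_poly v = 261/800 - 851/10800 * v - 22707/640000 * v^2 - 117479/480000 * v^3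
     + 99312113/373248000000 * v^4 - 2523/20000 * v^5 + 59649143/6912000000 * v^6
     + 687097/48000000 * v^8 + 24389/4000000 * v^10"

lemma maj_discr_eq:
  "9 * maj_coeff v * (1 - maj_prim v v)^2 - 4 * (1 - maj_const v)^3 = 4 * v^2 * maj_discr_poly v"
  unfolding maj_coeff_def maj_const_def maj_prim_def maj_discr_poly_def by algebra

lemma maj_discr_poly_nonneg:
  fixes v :: real
  assumes "0 \<le> v" "v \<le> 87/100"
  shows "0 \<le> maj_discr_poly v"
proof -
  have p: "v^k \<le> (87/100)^k" for k using assms by (intro power_mono) auto
  have "v^2 \<le> 7569/10000" "v^3 \<le> 658503/1000000" "v^5 \<le> 4984209207/10000000000"
    using p[of 2] p[of 3] p[of 5] by (simp_all add: eval_nat_numeral)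
  moreover have "0 \<le> v^4" "0 \<le> v^6" "0 \<le> v^8" "0 \<le> v^10" using assms by auto
  ultimately show ?thesis using assms unfolding maj_discr_poly_def by linarith
qed

lemma maj_prim_diff:
  "maj_prim v x - maj_prim v y = (x - y) * (maj_coeff v * (x^2 + x * y + y^2) / 3 + maj_const v)"
  unfolding maj_prim_def by (simp add: algebra_simps power2_eq_square power3_eq_cube diff_divide_distrib add_divide_distrib)

lemma maj_prim_diff_factor_nonneg:
  "0 \<le> maj_coeff v * (x^2 + x * v + v^2) / 3 + maj_const v"
proof -
  have "3/4 * v^2 \<le> x^2 + x * v + v^2"
    using zero_le_power2[of "x + v/2"] by (simp add: algebra_simps power2_eq_square)
  then have "maj_coeff v * (3/4 * v^2) / 3 \<le> maj_coeff v * (x^2 + x * v + v^2) / 3"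
    unfolding maj_coeff_def by (intro divide_right_mono mult_left_mono) auto
  moreover have "maj_coeff v * (3/4 * v^2) / 3 + maj_const v = v^2 * (1/9 - 87/800 + 29/400 * v^2)"
    unfolding maj_coeff_def maj_const_def by (simp add: algebra_simps power2_eq_square)
  moreover have "0 \<le> v^2 * (1/9 - 87/800 + 29/400 * v^2)" by (intro mult_nonneg_nonneg) auto
  ultimately show ?thesis by linarith
qed

lemma maj_prim_self_nonneg: "0 \<le> v \<Longrightarrow> 0 \<le> maj_prim v v"
  using maj_prim_diff[of v v 0] maj_prim_diff_factor_nonneg[of v 0]
  by (simp add: maj_prim_def)

lemma maj_prim_reflect: "maj_prim (- v) x = - maj_prim v (- x)"
  unfolding maj_prim_def maj_coeff_def maj_const_def by simp

lemma maj_prim_has_real_derivative: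
  "(maj_prim v has_real_derivative maj_coeff v * x^2 + maj_const v) (at x)"
  unfolding maj_prim_def[abs_def] by (rule derivative_eq_intros refl | simp)+

text \<open>For x > 1 the claim says that the cubic maj_prim v x - maj_prim v v - (x - 1) is
  nonnegative, which follows from the sign of its discriminant.\<close>
lemma maj_prim_gap_right_nonneg:
  assumes "0 \<le> v" "v \<le> 87/100" "v \<le> x"
  shows "max 0 (x - 1) \<le> maj_prim v x - maj_prim v v"
proof (cases "x \<le> 1")
  case True
  then show ?thesis
    using assms maj_prim_diff[of v x v] maj_prim_diff_factor_nonneg[of v x] by simp
next
  case False
  have a: "0 < maj_coeff v" and b: "0 \<le> 1 - maj_const v"
    unfolding maj_coeff_def maj_const_def by (simp_all add: add_pos_nonneg)
  have "maj_coeff v \<le> 1" unfolding maj_coeff_def using assms power_le_one[of v 2] by simp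
  then have "maj_coeff v * v^3 \<le> 1" using assms a power_le_one[of v 3] by (simp add: mult_le_one)
  moreover have "maj_const v * v \<le> 0" unfolding maj_const_def using assms by (simp add: mult_nonpos_nonneg)
  ultimately have K: "0 \<le> 1 - maj_prim v v" unfolding maj_prim_def by simp
  have "0 \<le> 4 * v^2 * maj_discr_poly v" using maj_discr_poly_nonneg[OF assms(1,2)] by simp
  then have "4 * (1 - maj_const v)^3 \<le> 9 * maj_coeff v * (1 - maj_prim v v)^2"
    using maj_discr_eq[of v] by linarith
  from cubic_nonneg_of_discriminant[OF a b K this, of x] False
  show ?thesis unfolding maj_prim_def by (simp add: algebra_simps)
qed

lemma maj_prim_gap_left_nonneg:
  assumes "0 \<le> v" "v \<le> 87/100" "x \<le> v"
  shows "max 0 (-1 - x) \<le> maj_prim v v - maj_prim v x"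
proof (cases "-1 \<le> x")
  case True
  then show ?thesis
    using assms maj_prim_diff[of v x v] maj_prim_diff_factor_nonneg[of v x]
      mult_nonpos_nonneg[of "x - v" "maj_coeff v * (x^2 + x * v + v^2) / 3 + maj_const v"]
    by simp
next
  case False
  then show ?thesis
    using maj_prim_gap_right_nonneg[of v "-x"] maj_prim_reflect[of 0 x] maj_prim_self_nonneg[of v] assms
    by (simp add: maj_prim_def)
qed

lemma maj_prim_gap_right:
  assumes "\<bar>v\<bar> \<le> 87/100" "v \<le> x"
  shows "max 0 (x - 1) \<le> maj_prim v x - maj_prim v v"
proof (cases "0 \<le> v")
  case True
  then show ?thesis using maj_prim_gap_right_nonneg assms by simp
next
  case False
  then show ?thesis
    using maj_prim_gap_left_nonneg[of "-v" "-x"] maj_prim_reflect[of v] assms by simp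
qed

lemma maj_prim_gap_left:
  assumes "\<bar>v\<bar> \<le> 87/100" "x \<le> v"
  shows "max 0 (-1 - x) \<le> maj_prim v v - maj_prim v x"
proof (cases "0 \<le> v")
  case True
  then show ?thesis using maj_prim_gap_left_nonneg assms by simp
next
  case False
  then show ?thesis
    using maj_prim_gap_right_nonneg[of "-v" "-x"] maj_prim_reflect[of v] assms by simp
qed

lemma maj_mean_le: "s \<le> 3/8 \<Longrightarrow> maj_coeff v * s + maj_const v \<le> 4/9 * s"
proof -
  assume "s \<le> 3/8"
  then have "29/100 * v^2 * (s - 3/8) \<le> 0" by (simp add: mult_nonneg_nonpos)
  moreover have "maj_coeff v * s + maj_const v - 4/9 * s = 29/100 * v^2 * (s - 3/8)"
    unfolding maj_coeff_def maj_const_def by (simp add: algebra_simps)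
  ultimately show ?thesis by simp
qed

lemma maj_prim_scaled_gap_right:
  fixes \<epsilon> \<gamma> v t :: real
  assumes "0 < \<epsilon>" "\<bar>v\<bar> \<le> 87/100" "\<gamma> + \<epsilon> * v \<le> t"
  shows "max 0 (t - (\<gamma> + \<epsilon>)) \<le> \<epsilon> * maj_prim v ((t - \<gamma>) / \<epsilon>) - \<epsilon> * maj_prim v v"
proof -
  have "v \<le> (t - \<gamma>) / \<epsilon>" using assms by (simp add: field_simps)
  then have "\<epsilon> * max 0 ((t - \<gamma>) / \<epsilon> - 1) \<le> \<epsilon> * (maj_prim v ((t - \<gamma>) / \<epsilon>) - maj_prim v v)"
    using maj_prim_gap_right[OF assms(2)] assms(1) by (intro mult_left_mono) auto
  moreover have "\<epsilon> * ((t - \<gamma>) / \<epsilon> - 1) = t - (\<gamma> + \<epsilon>)"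
    using assms(1) by (simp add: field_simps)
  ultimately show ?thesis using assms(1) by (simp add: max_mult_distrib_left algebra_simps)
qed

lemma maj_prim_scaled_gap_left:
  fixes \<epsilon> \<gamma> v t :: real
  assumes "0 < \<epsilon>" "\<bar>v\<bar> \<le> 87/100" "t \<le> \<gamma> + \<epsilon> * v"
  shows "max 0 (\<gamma> - \<epsilon> - t) \<le> \<epsilon> * maj_prim v v - \<epsilon> * maj_prim v ((t - \<gamma>) / \<epsilon>)"
proof -
  have "(t - \<gamma>) / \<epsilon> \<le> v" using assms by (simp add: field_simps)
  then have "\<epsilon> * max 0 (-1 - (t - \<gamma>) / \<epsilon>) \<le> \<epsilon> * (maj_prim v v - maj_prim v ((t - \<gamma>) / \<epsilon>))"
    using maj_prim_gap_left[OF assms(2)] assms(1) by (intro mult_left_mono) auto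
  moreover have "\<epsilon> * (-1 - (t - \<gamma>) / \<epsilon>) = \<gamma> - \<epsilon> - t"
    using assms(1) by (simp add: field_simps)
  ultimately show ?thesis using assms(1) by (simp add: max_mult_distrib_left algebra_simps)
qed

lemma maj_prim_scaled_has_real_derivative:
  fixes \<epsilon> \<gamma> :: real
  assumes "\<epsilon> \<noteq> 0"
  shows "((\<lambda>t. \<epsilon> * maj_prim v ((t - \<gamma>) / \<epsilon>)) has_real_derivative
    maj_coeff v * ((t - \<gamma>) / \<epsilon>)^2 + maj_const v) (at t)"
proof -
  have "((\<lambda>t. (t - \<gamma>) / \<epsilon>) has_real_derivative 1 / \<epsilon>) (at t)"
    using DERIV_cdivide[OF DERIV_diff[OF DERIV_ident DERIV_const]] by simp
  from DERIV_cmult[OF DERIV_chain2[OF maj_prim_has_real_derivative this], of \<epsilon>]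
  show ?thesis using assms by simp
qed

section \<open>Tail bounds by integration by parts\<close>

lemma le_of_deriv_nonneg:
  fixes f f' :: "real \<Rightarrow> real"
  assumes "a \<le> b" "\<And>t. (f has_real_derivative f' t) (at t)"
    and "\<And>t. a < t \<Longrightarrow> t < b \<Longrightarrow> 0 \<le> f' t"
  shows "f a \<le> f b"
proof (rule DERIV_nonneg_imp_increasing_open[OF assms(1)])
  show "\<exists>y. (f has_real_derivative y) (at x) \<and> 0 \<le> y" if "a < x" "x < b" for x
    using assms that by blast
  show "continuous_on {a..b} f"
    using assms(2) by (meson DERIV_isCont continuous_at_imp_continuous_on)
qed

text \<open>Integration by parts: where g decreases, (A - (Q - Q \<nu>) g)' = -(Q - Q \<nu>) g' \<ge> 0.\<close>
lemma tail_le_majorant_integral_right: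
  fixes A G g g' q Q :: "real \<Rightarrow> real"
  assumes A: "\<And>t. (A has_real_derivative q t * g t) (at t)"
    and G: "\<And>t. (G has_real_derivative g t) (at t)"
    and g: "\<And>t. (g has_real_derivative g' t) (at t)"
    and Q: "\<And>t. (Q has_real_derivative q t) (at t)"
    and "\<nu> \<le> b" "\<nu> \<le> h"
    and g'_nonpos: "\<And>t. \<nu> < t \<Longrightarrow> t < b \<Longrightarrow> g' t \<le> 0" and "0 \<le> g b"
    and gap: "\<And>t. \<nu> \<le> t \<Longrightarrow> t \<le> b \<Longrightarrow> max 0 (t - h) \<le> Q t - Q \<nu>"
  shows "(if h < b then G b - G h else 0) \<le> A b - A \<nu>"
proof -
  define P where "P t = A t - (Q t - Q \<nu>) * g t" for t
  have dP: "(P has_real_derivative - (Q t - Q \<nu>) * g' t) (at t)" for t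
    unfolding P_def[abs_def]
    by (rule derivative_eq_intros A Q g refl | simp add: algebra_simps)+
  have "P \<nu> \<le> P (min h b)"
  proof (rule le_of_deriv_nonneg[OF _ dP])
    fix t assume "\<nu> < t" "t < min h b"
    then show "0 \<le> - (Q t - Q \<nu>) * g' t"
      using gap[of t] g'_nonpos[of t] by (simp add: mult_nonpos_nonpos)
  qed (use assms in simp)
  then have P_min: "A \<nu> \<le> A (min h b) - (Q (min h b) - Q \<nu>) * g (min h b)"
    by (simp add: P_def)
  show ?thesis
  proof (cases "h < b")
    case False
    have "0 \<le> (Q b - Q \<nu>) * g b" using gap[of b] assms(5,8) by simp
    with P_min False show ?thesis by simp
  next
    case True
    define R where "R t = A t - G t - (Q t - Q \<nu> - (t - h)) * g t" for t
    have dR: "(R has_real_derivative - (Q t - Q \<nu> - (t - h)) * g' t) (at t)" for t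
      unfolding R_def[abs_def]
      by (rule derivative_eq_intros A G Q g refl | simp add: algebra_simps)+
    have "R h \<le> R b"
    proof (rule le_of_deriv_nonneg[OF _ dR])
      fix t assume "h < t" "t < b"
      then show "0 \<le> - (Q t - Q \<nu> - (t - h)) * g' t"
        using gap[of t] g'_nonpos[of t] assms(6) by (simp add: mult_nonpos_nonpos)
    qed (use True in simp)
    moreover have "0 \<le> (Q b - Q \<nu> - (b - h)) * g b"
      using gap[of b] assms(5,8) True by simp
    ultimately show ?thesis
      using True P_min by (simp add: R_def)
  qed
qed

lemma has_real_derivative_reflect:
  assumes "\<And>t. (f has_real_derivative f' t) (at t)"
  shows "((\<lambda>t. - f (- t)) has_real_derivative f' (- t)) (at t)"
  using DERIV_minus[OF DERIV_mirror[THEN iffD1, OF assms]] by simp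

text \<open>The mirror image of the right-tail bound under t \<mapsto> -t.\<close>
lemma tail_le_majorant_integral_left:
  fixes A G g g' q Q :: "real \<Rightarrow> real"
  assumes A: "\<And>t. (A has_real_derivative q t * g t) (at t)"
    and G: "\<And>t. (G has_real_derivative g t) (at t)"
    and g: "\<And>t. (g has_real_derivative g' t) (at t)"
    and Q: "\<And>t. (Q has_real_derivative q t) (at t)"
    and "a \<le> \<nu>" "l \<le> \<nu>"
    and g'_nonneg: "\<And>t. a < t \<Longrightarrow> t < \<nu> \<Longrightarrow> 0 \<le> g' t" and "0 \<le> g a"
    and gap: "\<And>t. a \<le> t \<Longrightarrow> t \<le> \<nu> \<Longrightarrow> max 0 (l - t) \<le> Q \<nu> - Q t"
  shows "(if a < l then G l - G a else 0) \<le> A \<nu> - A a"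
proof -
  have "(if - l < - a then - G (- (- a)) - - G (- (- l)) else 0) \<le> - A (- (- a)) - - A (- (- \<nu>))"
  proof (rule tail_le_majorant_integral_right[where A = "\<lambda>t. - A (- t)" and G = "\<lambda>t. - G (- t)"
        and g = "\<lambda>t. g (- t)" and g' = "\<lambda>t. - g' (- t)" and q = "\<lambda>t. q (- t)"
        and Q = "\<lambda>t. - Q (- t)" and \<nu> = "- \<nu>" and b = "- a" and h = "- l"])
    show "((\<lambda>t. - A (- t)) has_real_derivative q (- t) * g (- t)) (at t)" for t
      using has_real_derivative_reflect[OF A] .
    show "((\<lambda>t. - G (- t)) has_real_derivative g (- t)) (at t)" for t
      using has_real_derivative_reflect[OF G] .
    show "((\<lambda>t. - Q (- t)) has_real_derivative q (- t)) (at t)" for t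
      using has_real_derivative_reflect[OF Q] .
    show "((\<lambda>t. g (- t)) has_real_derivative - g' (- t)) (at t)" for t
      using DERIV_mirror g by blast
    fix t
    show "- \<nu> < t \<Longrightarrow> t < - a \<Longrightarrow> - g' (- t) \<le> 0" using g'_nonneg[of "- t"] by simp
    show "- \<nu> \<le> t \<Longrightarrow> t \<le> - a \<Longrightarrow> max 0 (t - - l) \<le> - Q (- t) - - Q (- (- \<nu>))"
      using gap[of "- t"] by simp
  qed (use assms in simp_all)
  then show ?thesis by (cases "a < l") simp_all
qed

lemma unimodal_tail_le_majorant_integral:
  fixes A G g g' q Q :: "real \<Rightarrow> real"
  assumes A: "\<And>t. (A has_real_derivative q t * g t) (at t)"
    and G: "\<And>t. (G has_real_derivative g t) (at t)"
    and g: "\<And>t. (g has_real_derivative g' t) (at t)"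
    and Q: "\<And>t. (Q has_real_derivative q t) (at t)"
    and "G 0 = 0" "G 1 = 1" "0 \<le> g 0" "0 \<le> g 1"
    and "0 \<le> \<nu>" "\<nu> \<le> 1" "l \<le> \<nu>" "\<nu> \<le> h"
    and g'_nonneg: "\<And>t. 0 < t \<Longrightarrow> t < \<nu> \<Longrightarrow> 0 \<le> g' t"
    and g'_nonpos: "\<And>t. \<nu> < t \<Longrightarrow> t < 1 \<Longrightarrow> g' t \<le> 0"
    and gap_left: "\<And>t. 0 \<le> t \<Longrightarrow> t \<le> \<nu> \<Longrightarrow> max 0 (l - t) \<le> Q \<nu> - Q t"
    and gap_right: "\<And>t. \<nu> \<le> t \<Longrightarrow> t \<le> 1 \<Longrightarrow> max 0 (t - h) \<le> Q t - Q \<nu>"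
  shows "(if 0 < l then G l else 0) + (if h < 1 then 1 - G h else 0) \<le> A 1 - A 0"
proof -
  have "(if 0 < l then G l - G 0 else 0) \<le> A \<nu> - A 0"
    by (rule tail_le_majorant_integral_left[OF A G g Q _ _ g'_nonneg _ gap_left]) (use assms in simp_all)
  moreover have "(if h < 1 then G 1 - G h else 0) \<le> A 1 - A \<nu>"
    by (rule tail_le_majorant_integral_right[OF A G g Q _ _ g'_nonpos _ gap_right]) (use assms in simp_all)
  ultimately show ?thesis using \<open>G 0 = 0\<close> \<open>G 1 = 1\<close> by (cases "0 < l"; cases "h < 1") simp_all
qed

section \<open>Binomial tails and the Beta density\<close>

text \<open>binom_tail N m t is the probability that a Binomial(N, t) variable is at least m, which is
  also the distribution function of the Beta(m, N + 1 - m) law of the m-th order statistic of N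
  independent uniform samples; beta_dens N m is its density.\<close>
definition binom_tail :: "nat \<Rightarrow> nat \<Rightarrow> real \<Rightarrow> real" where
  "binom_tail N m t = (\<Sum>j=m..N. real (N choose j) * t^j * (1 - t)^(N - j))"

definition beta_dens :: "nat \<Rightarrow> nat \<Rightarrow> real \<Rightarrow> real" where
  "beta_dens N m t = real m * real (N choose m) * t^(m - 1) * (1 - t)^(N - m)"

definition beta_dens_deriv :: "nat \<Rightarrow> nat \<Rightarrow> real \<Rightarrow> real" where
  "beta_dens_deriv N m t = real m * real (N choose m) *
     (real (m - 1) * t^(m - 1 - 1) * (1 - t)^(N - m) - real (N - m) * t^(m - 1) * (1 - t)^(N - m - 1))"

text \<open>For N = 1 the density is constant and every point of [0, 1] is a mode.\<close>
definition beta_mode :: "nat \<Rightarrow> nat \<Rightarrow> real" where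
  "beta_mode N m = (if N = 1 then 1/2 else real (m - 1) / real (N - 1))"

lemma binom_tail_has_real_derivative:
  assumes "m \<le> Suc N"
  shows "(binom_tail N m has_real_derivative beta_dens N m t) (at t)"
  using assms
proof (induction m rule: inc_induct)
  case base
  have "binom_tail N (Suc N) = (\<lambda>_. 0)" "beta_dens N (Suc N) t = 0"
    by (auto simp: binom_tail_def beta_dens_def fun_eq_iff)
  then show ?case by simp
next
  case (step m)
  have tail: "binom_tail N m = (\<lambda>t. real (N choose m) * t^m * (1 - t)^(N - m) + binom_tail N (Suc m) t)"
    using step.hyps by (simp add: binom_tail_def fun_eq_iff sum.atLeast_Suc_atMost)
  have "(N - m) * (N choose m) = Suc m * (N choose Suc m)"
    using binomial_absorb_comp[of N m] times_binomial_minus1_eq[of "Suc m" N] by simp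
  then have bi: "real (N - m) * real (N choose m) = real (Suc m) * real (N choose Suc m)"
    by (metis of_nat_mult)
  have "((\<lambda>t. real (N choose m) * t^m * (1 - t)^(N - m) + binom_tail N (Suc m) t) has_real_derivative
      real (N choose m) * (real m * t^(m - 1) * (1 - t)^(N - m) - real (N - m) * t^m * (1 - t)^(N - m - 1))
        + beta_dens N (Suc m) t) (at t)"
    by (rule derivative_eq_intros step.IH refl | simp add: algebra_simps)+
  moreover have "real (N choose m) * (real m * t^(m - 1) * (1 - t)^(N - m) - real (N - m) * t^m * (1 - t)^(N - m - 1))
      + beta_dens N (Suc m) t = beta_dens N m t"
  proof -
    have "real (N choose m) * (real (N - m) * t^m * (1 - t)^(N - m - 1))
        = (real (N - m) * real (N choose m)) * t^m * (1 - t)^(N - m - 1)"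
      by (simp add: algebra_simps)
    also have "\<dots> = beta_dens N (Suc m) t" unfolding bi beta_dens_def by (simp add: algebra_simps)
    finally show ?thesis unfolding beta_dens_def by (simp add: algebra_simps)
  qed
  ultimately show ?case unfolding tail by simp
qed

lemma binom_tail_0: "1 \<le> m \<Longrightarrow> binom_tail N m 0 = 0"
  unfolding binom_tail_def by (intro sum.neutral) auto

lemma binom_tail_1:
  assumes "m \<le> N"
  shows "binom_tail N m 1 = 1"
proof -
  have "binom_tail N m 1 = (\<Sum>j\<in>{m..N}. if j = N then 1 else 0)"
    unfolding binom_tail_def by (intro sum.cong) auto
  then show ?thesis using assms by simp
qed

lemma beta_dens_nonneg: "0 \<le> t \<Longrightarrow> t \<le> 1 \<Longrightarrow> 0 \<le> beta_dens N m t"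
  unfolding beta_dens_def by simp

lemma mult_beta_dens:
  assumes "1 \<le> m"
  shows "t * beta_dens N m t = real m / real (Suc N) * beta_dens (Suc N) (Suc m) t"
proof -
  have bi: "real (Suc m) * real (Suc N choose Suc m) = real (Suc N) * real (N choose m)"
    using Suc_times_binomial[of m N] by (metis of_nat_mult)
  have "real m / real (Suc N) * beta_dens (Suc N) (Suc m) t
      = real m / real (Suc N) * (real (Suc m) * real (Suc N choose Suc m)) * t^m * (1 - t)^(N - m)"
    unfolding beta_dens_def by simp
  also have "\<dots> = real m * real (N choose m) * t^m * (1 - t)^(N - m)" unfolding bi by simp
  also have "t^m = t * t^(m - 1)" using assms by (cases m) auto
  finally show ?thesis unfolding beta_dens_def by (simp add: algebra_simps)
qed

lemma beta_dens_has_real_derivative: "(beta_dens N m has_real_derivative beta_dens_deriv N m t) (at t)"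
  unfolding beta_dens_def[abs_def] beta_dens_deriv_def
  by (rule derivative_eq_intros refl | simp add: algebra_simps)+

lemma beta_dens_deriv_eq:
  assumes "2 \<le> m" "m < N"
  shows "beta_dens_deriv N m t = real m * real (N choose m) * (t^(m - 1 - 1) * (1 - t)^(N - m - 1))
    * (real (m - 1) - real (N - 1) * t)"
proof -
  have e1: "t^(m - 1) = t * t^(m - 1 - 1)" using assms by (cases "m - 1") auto
  have e2: "(1 - t)^(N - m) = (1 - t) * (1 - t)^(N - m - 1)" using assms by (cases "N - m") auto
  have e3: "real (N - m) = real (N - 1) - real (m - 1)" using assms by simp
  show ?thesis unfolding beta_dens_deriv_def e1 e2 e3 by (simp add: algebra_simps)
qed

lemma beta_dens_deriv_nonneg:
  assumes "1 \<le> m" "m \<le> N" "0 < t" "t < beta_mode N m"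
  shows "0 \<le> beta_dens_deriv N m t"
proof (cases "N = 1")
  case True
  then show ?thesis using assms by (simp add: beta_dens_deriv_def)
next
  case False
  then have N: "0 < real (N - 1)" using assms by simp
  then have lt: "real (N - 1) * t < real (m - 1)"
    using assms False by (simp add: beta_mode_def field_simps)
  moreover have "0 < real (N - 1) * t" using N assms(3) by simp
  ultimately have "0 < real (m - 1)" by linarith
  then have m2: "2 \<le> m" by simp
  show ?thesis
  proof (cases "m = N")
    case True
    then show ?thesis using m2 assms(3) by (simp add: beta_dens_deriv_def)
  next
    case False
    have "real (m - 1) \<le> real (N - 1)" using assms(2) by simp
    then have "real (N - 1) * t < real (N - 1) * 1" using lt by linarith
    then have "t < 1" using N by (simp only: mult_less_cancel_left_pos)
    then have "0 \<le> real m * real (N choose m) * (t^(m - 1 - 1) * (1 - t)^(N - m - 1))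
        * (real (m - 1) - real (N - 1) * t)"
      using lt assms(3) by (intro mult_nonneg_nonneg) auto
    then show ?thesis using beta_dens_deriv_eq[of m N t] m2 False assms(2) by simp
  qed
qed

lemma beta_dens_deriv_nonpos:
  assumes "1 \<le> m" "m \<le> N" "beta_mode N m < t" "t < 1"
  shows "beta_dens_deriv N m t \<le> 0"
proof (cases "N = 1")
  case True
  then show ?thesis using assms by (simp add: beta_dens_deriv_def)
next
  case False
  then have N: "0 < real (N - 1)" using assms by simp
  then have lt: "real (m - 1) < real (N - 1) * t"
    using assms False by (simp add: beta_mode_def field_simps)
  moreover have "real (N - 1) * t < real (N - 1)" using N assms(4) by simp
  ultimately have "m < N" using assms(1) by linarith
  show ?thesis
  proof (cases "m = 1")
    case True
    then show ?thesis using assms by (simp add: beta_dens_deriv_def)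
  next
    case False
    have "0 \<le> beta_mode N m" by (simp add: beta_mode_def)
    then have "0 \<le> real m * real (N choose m) * (t^(m - 1 - 1) * (1 - t)^(N - m - 1))"
      using assms by simp
    then show ?thesis
      using beta_dens_deriv_eq[of m N t] False assms(1) \<open>m < N\<close> lt
      by (simp add: mult_nonneg_nonpos)
  qed
qed

text \<open>Since t * beta_dens N m t is a multiple of beta_dens (N + 1) (m + 1) t, the second
  moment of the Beta law is again a combination of binomial tails.\<close>
lemma beta_variance_primitive:
  fixes N m :: nat
  assumes "1 \<le> m" "m \<le> N"
  defines "\<gamma> \<equiv> real m / real (Suc N)"
  defines "V \<equiv> \<lambda>t. \<gamma> * real (Suc m) / real (Suc (Suc N)) * binom_tail (Suc (Suc N)) (Suc (Suc m)) t
    - 2 * \<gamma>^2 * binom_tail (Suc N) (Suc m) t + \<gamma>^2 * binom_tail N m t"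
  shows "(V has_real_derivative (t - \<gamma>)^2 * beta_dens N m t) (at t)"
    and "V 0 = 0" and "V 1 = \<gamma> * (1 - \<gamma>) / real (N + 2)"
proof -
  have t1: "t * beta_dens N m t = \<gamma> * beta_dens (Suc N) (Suc m) t"
    using mult_beta_dens[OF assms(1)] by (simp add: \<gamma>_def)
  have t2: "t * beta_dens (Suc N) (Suc m) t = real (Suc m) / real (Suc (Suc N)) * beta_dens (Suc (Suc N)) (Suc (Suc m)) t"
    using mult_beta_dens[of "Suc m"] by simp
  have dV: "(V has_real_derivative \<gamma> * real (Suc m) / real (Suc (Suc N)) * beta_dens (Suc (Suc N)) (Suc (Suc m)) t
      - 2 * \<gamma>^2 * beta_dens (Suc N) (Suc m) t + \<gamma>^2 * beta_dens N m t) (at t)"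
    unfolding V_def
    by (rule derivative_eq_intros binom_tail_has_real_derivative refl | use assms(2) in simp)+
  have e2: "\<gamma> * real (Suc m) / real (Suc (Suc N)) * beta_dens (Suc (Suc N)) (Suc (Suc m)) t
      = t^2 * beta_dens N m t"
  proof -
    have "\<gamma> * real (Suc m) / real (Suc (Suc N)) * beta_dens (Suc (Suc N)) (Suc (Suc m)) t
        = \<gamma> * (t * beta_dens (Suc N) (Suc m) t)" using t2 by simp
    also have "\<dots> = t * (t * beta_dens N m t)" using t1 by (simp add: algebra_simps)
    finally show ?thesis by (simp add: power2_eq_square)
  qed
  have e1: "2 * \<gamma>^2 * beta_dens (Suc N) (Suc m) t = 2 * \<gamma> * (t * beta_dens N m t)"
    using t1 by (simp add: power2_eq_square)
  show "(V has_real_derivative (t - \<gamma>)^2 * beta_dens N m t) (at t)"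
    using dV unfolding e1 e2 by (simp add: power2_eq_square algebra_simps)
  show "V 0 = 0" using assms(1) by (simp add: V_def binom_tail_0)
  have "V 1 = \<gamma> * (real (Suc m) / real (Suc (Suc N)) - \<gamma>)"
    using assms(2) by (simp add: V_def binom_tail_1 power2_eq_square right_diff_distrib)
  also have "real (Suc m) / real (Suc (Suc N)) - \<gamma> = (1 - \<gamma>) / real (N + 2)"
    unfolding \<gamma>_def by (simp add: field_simps add_pos_nonneg[THEN less_imp_neq, symmetric])
  finally show "V 1 = \<gamma> * (1 - \<gamma>) / real (N + 2)" by simp
qed

lemma sq_diff_mult_le:
  fixes p r :: real
  assumes "1 \<le> p" "1 \<le> r" "3 \<le> p + r"
  shows "(p - r)^2 * (p + r + 1) \<le> 2 * p * r * (p + r - 2)^2"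
proof -
  have "(p - r)^2 \<le> (p + r - 2)^2"
    using assms abs_le_square_iff[of "p - r" "p + r - 2"] by auto
  moreover have "p + r + 1 \<le> 2 * p * r"
    using assms mult_nonneg_nonneg[of "p - 1" "r - 1"] by (simp add: algebra_simps)
  ultimately have "(p - r)^2 * (p + r + 1) \<le> (p + r - 2)^2 * (2 * p * r)"
    using assms by (intro mult_mono) auto
  then show ?thesis by (simp add: algebra_simps)
qed

lemma beta_mode_dist_sq_le:
  fixes N m :: nat
  assumes "1 \<le> m" "m \<le> N"
  defines "\<gamma> \<equiv> real m / real (Suc N)"
  shows "(beta_mode N m - \<gamma>)^2 \<le> 2 * (\<gamma> * (1 - \<gamma>) / real (N + 2))"
proof (cases "N = 1")
  case True
  then show ?thesis using assms by (simp add: beta_mode_def)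
next
  case False
  define p where "p = real m"
  define r where "r = real (Suc N - m)"
  have pr: "1 \<le> p" "1 \<le> r" "3 \<le> p + r" using assms False by (auto simp: p_def r_def)
  have \<gamma>: "\<gamma> = p / (p + r)" and N2: "real (N + 2) = p + r + 1"
    using assms by (simp_all add: \<gamma>_def p_def r_def of_nat_diff)
  have mode: "beta_mode N m = (p - 1) / (p + r - 2)"
    using assms False by (simp add: beta_mode_def p_def r_def of_nat_diff)
  have nz: "p + r - 2 \<noteq> 0" "p + r \<noteq> 0" "p + r + 1 \<noteq> 0" using pr by auto
  then have "beta_mode N m - \<gamma> = (p - r) / ((p + r - 2) * (p + r))"
    unfolding mode \<gamma> by (simp add: field_simps)
  then have "(beta_mode N m - \<gamma>)^2 = (p - r)^2 * (p + r + 1) / ((p + r - 2)^2 * (p + r)^2 * (p + r + 1))"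
    using pr by (simp add: power_divide power_mult_distrib)
  also have "\<dots> \<le> 2 * p * r * (p + r - 2)^2 / ((p + r - 2)^2 * (p + r)^2 * (p + r + 1))"
    using sq_diff_mult_le[OF pr] pr by (intro divide_right_mono) auto
  also have "\<dots> = 2 * p * r / ((p + r)^2 * (p + r + 1))"
    using nz by simp
  also have "\<dots> = 2 * (\<gamma> * (1 - \<gamma>) / real (N + 2))"
  proof -
    have "1 - p / (p + r) = r / (p + r)" using nz by (simp add: field_simps)
    then show ?thesis unfolding \<gamma> N2 by (simp add: power2_eq_square)
  qed
  finally show ?thesis .
qed

lemma beta_mode_offset_le:
  fixes N m :: nat and \<gamma> \<epsilon> :: real
  assumes m: "1 \<le> m" "m \<le> N" and \<gamma>: "\<gamma> = real m / real (Suc N)" and \<epsilon>: "0 < \<epsilon>"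
    and var: "\<gamma> * (1 - \<gamma>) / real (N + 2) \<le> 3/8 * \<epsilon>^2"
  shows "\<bar>(beta_mode N m - \<gamma>) / \<epsilon>\<bar> \<le> 87/100"
proof -
  have "(beta_mode N m - \<gamma>)^2 \<le> 3/4 * \<epsilon>^2"
    using beta_mode_dist_sq_le[OF m, folded \<gamma>] var by linarith
  then have "((beta_mode N m - \<gamma>) / \<epsilon>)^2 \<le> 3/4"
    using \<epsilon> by (simp add: power_divide pos_divide_le_eq)
  also have "\<dots> \<le> (87/100)^2" by (simp add: power2_eq_square)
  finally show ?thesis using abs_le_square_iff[of "(beta_mode N m - \<gamma>) / \<epsilon>" "87/100"] by simp
qed

lemma beta_central_tail_bound:
  fixes N m :: nat and \<gamma> \<epsilon> :: real
  assumes m: "1 \<le> m" "m \<le> N" and \<gamma>: "\<gamma> = real m / real (Suc N)" and \<epsilon>: "0 < \<epsilon>"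
    and var: "\<gamma> * (1 - \<gamma>) / real (N + 2) \<le> 3/8 * \<epsilon>^2"
  shows "(if 0 < \<gamma> - \<epsilon> then binom_tail N m (\<gamma> - \<epsilon>) else 0)
      + (if \<gamma> + \<epsilon> < 1 then 1 - binom_tail N m (\<gamma> + \<epsilon>) else 0)
    \<le> 4/9 * (\<gamma> * (1 - \<gamma>) / real (N + 2)) / \<epsilon>^2"
proof -
  define s where "s = \<gamma> * (1 - \<gamma>) / real (N + 2) / \<epsilon>^2"
  define \<nu> where "\<nu> = beta_mode N m"
  define v where "v = (\<nu> - \<gamma>) / \<epsilon>"
  have s: "s \<le> 3/8" using var \<epsilon> by (simp add: s_def pos_divide_le_eq mult_ac)
  have v: "\<bar>v\<bar> \<le> 87/100" using beta_mode_offset_le[OF m \<gamma> \<epsilon> var] by (simp add: v_def \<nu>_def)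
  have \<nu>: "\<nu> = \<gamma> + \<epsilon> * v" using \<epsilon> by (simp add: v_def)
  have "\<bar>\<epsilon> * v\<bar> \<le> \<epsilon>" using v \<epsilon> by (simp add: abs_mult mult_left_le)
  then have \<nu>_near: "\<gamma> - \<epsilon> \<le> \<nu>" "\<nu> \<le> \<gamma> + \<epsilon>" unfolding \<nu> by auto
  have \<nu>01: "0 \<le> \<nu>" "\<nu> \<le> 1" using m by (auto simp: \<nu>_def beta_mode_def divide_le_eq_1)
  define q where "q t = maj_coeff v * ((t - \<gamma>) / \<epsilon>)^2 + maj_const v" for t
  define Q where "Q t = \<epsilon> * maj_prim v ((t - \<gamma>) / \<epsilon>)" for t
  have dQ: "(Q has_real_derivative q t) (at t)" for t
    using maj_prim_scaled_has_real_derivative[of \<epsilon> v \<gamma> t] \<epsilon> unfolding Q_def[abs_def] q_def by simp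
  obtain V where dV: "\<And>t. (V has_real_derivative (t - \<gamma>)^2 * beta_dens N m t) (at t)"
    and V0: "V 0 = 0" and V1: "V 1 = \<gamma> * (1 - \<gamma>) / real (N + 2)"
    using beta_variance_primitive[OF m] unfolding \<gamma>[symmetric] by blast
  define A where "A t = maj_coeff v / \<epsilon>^2 * V t + maj_const v * binom_tail N m t" for t
  have G: "(binom_tail N m has_real_derivative beta_dens N m t) (at t)" for t
    using binom_tail_has_real_derivative m by simp
  have dA: "(A has_real_derivative q t * beta_dens N m t) (at t)" for t
  proof -
    have "(A has_real_derivative maj_coeff v / \<epsilon>^2 * ((t - \<gamma>)^2 * beta_dens N m t)
        + maj_const v * beta_dens N m t) (at t)"
      unfolding A_def[abs_def] by (intro DERIV_add DERIV_cmult dV G)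
    then show ?thesis by (simp add: q_def power_divide algebra_simps)
  qed
  have "(if 0 < \<gamma> - \<epsilon> then binom_tail N m (\<gamma> - \<epsilon>) else 0)
      + (if \<gamma> + \<epsilon> < 1 then 1 - binom_tail N m (\<gamma> + \<epsilon>) else 0) \<le> A 1 - A 0"
  proof (rule unimodal_tail_le_majorant_integral[OF dA G beta_dens_has_real_derivative dQ
        binom_tail_0[OF m(1)] binom_tail_1[OF m(2)] _ _ \<nu>01 \<nu>_near])
    show "0 \<le> beta_dens_deriv N m t" if "0 < t" "t < \<nu>" for t
      using beta_dens_deriv_nonneg[OF m that(1)] that(2) by (simp add: \<nu>_def)
    show "beta_dens_deriv N m t \<le> 0" if "\<nu> < t" "t < 1" for t
      using beta_dens_deriv_nonpos[OF m _ that(2)] that(1) by (simp add: \<nu>_def)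
    show "max 0 (\<gamma> - \<epsilon> - t) \<le> Q \<nu> - Q t" if "t \<le> \<nu>" for t
      using maj_prim_scaled_gap_left[OF \<epsilon> v, of t \<gamma>] that \<nu> unfolding Q_def v_def[symmetric] by simp
    show "max 0 (t - (\<gamma> + \<epsilon>)) \<le> Q t - Q \<nu>" if "\<nu> \<le> t" for t
      using maj_prim_scaled_gap_right[OF \<epsilon> v, of \<gamma> t] that \<nu> unfolding Q_def v_def[symmetric] by simp
  qed (simp_all add: beta_dens_nonneg)
  also have "A 1 - A 0 = maj_coeff v * s + maj_const v"
    using V0 V1 m by (simp add: A_def s_def binom_tail_0 binom_tail_1)
  also have "\<dots> \<le> 4/9 * s" using maj_mean_le[OF s] .
  also have "\<dots> = 4/9 * (\<gamma> * (1 - \<gamma>) / real (N + 2)) / \<epsilon>^2" by (simp add: s_def)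
  finally show ?thesis .
qed

section \<open>Choice of the sample size\<close>

lemma order_stat_index:
  fixes \<gamma> :: real and n1 n2 N :: nat and k :: int
  assumes "0 < \<gamma>" "\<gamma> < 1" "\<gamma> = real n1 / real n2" "1 \<le> k" "int N = k * int n2 - 1"
  defines "m \<equiv> nat \<lfloor>real N * \<gamma>\<rfloor> + 1"
  shows "1 \<le> m" "m \<le> N" "\<gamma> = real m / real (Suc N)"
proof -
  have n: "0 < n1" "n1 < n2" using assms(1-3) by (auto simp: divide_less_eq_1 zero_less_divide_iff)
  define K where "K = nat k"
  have K: "1 \<le> K" "int N = int K * int n2 - 1" using assms(4,5) by (simp_all add: K_def)
  then have "int (N + 1) = int (K * n2)" by simp
  then have NK: "N + 1 = K * n2" by (simp only: of_nat_eq_iff)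
  have "real N = real K * real n2 - 1"
    using arg_cong[OF NK, of real] by simp
  then have "real N * \<gamma> = (real K * real n2 - 1) * real n1 / real n2" using assms(3) by simp
  also have "\<dots> = real (K * n1) - real n1 / real n2" using n by (simp add: field_simps)
  finally have "real N * \<gamma> = real (K * n1) - real n1 / real n2" .
  moreover have "0 < real n1 / real n2" "real n1 / real n2 < 1" using assms(1-3) by auto
  ultimately have floor: "\<lfloor>real N * \<gamma>\<rfloor> = int (K * n1) - 1" by (intro floor_unique) auto
  obtain j where "K * n1 = Suc j" using K n by (cases "K * n1") auto
  then have mK: "m = K * n1" unfolding m_def floor by simp
  show "1 \<le> m" using mK K n by simp
  have "K * n1 < K * n2" using K n by simp
  then show "m \<le> N" using mK NK by linarith
  have "real m / real (Suc N) = (real K * real n1) / (real K * real n2)"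
    using mK NK by (simp del: of_nat_mult add: of_nat_mult[symmetric])
  then show "\<gamma> = real m / real (Suc N)" using K assms(3) by simp
qed

lemma sample_size_variance:
  fixes \<gamma> \<epsilon> \<rho> :: real and n2 N :: nat and k :: int
  assumes "0 < n2" "0 < \<epsilon>" "0 < \<rho>" "9 * \<rho> * \<epsilon>^2 < 4 * \<gamma> * (1 - \<gamma>)"
    and k: "k = \<lceil>(1 / real n2) * ((4 * \<gamma> * (1 - \<gamma>)) / (9 * \<rho> * \<epsilon>^2) - 1)\<rceil>"
    and N: "int N = k * int n2 - 1"
  shows "1 \<le> k" "\<gamma> * (1 - \<gamma>) / real (N + 2) \<le> 9/4 * \<rho> * \<epsilon>^2"
proof -
  define B where "B = (4 * \<gamma> * (1 - \<gamma>)) / (9 * \<rho> * \<epsilon>^2)"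
  have den: "0 < 9 * \<rho> * \<epsilon>^2" using assms by simp
  then have "1 < B" using assms(4) by (simp add: B_def)
  then have "0 < (B - 1) / real n2" using assms(1) by simp
  moreover have kB: "(B - 1) / real n2 \<le> real_of_int k" unfolding k B_def by simp
  ultimately have "0 < real_of_int k" by linarith
  then show "1 \<le> k" by simp
  have "real N = real_of_int k * real n2 - 1" using N by (metis of_int_diff of_int_mult of_int_of_nat_eq of_int_1)
  then have "B \<le> real N + 2" using kB assms(1) by (simp add: field_simps)
  then have "4 * \<gamma> * (1 - \<gamma>) \<le> 9 * \<rho> * \<epsilon>^2 * (real N + 2)" using den by (simp add: B_def field_simps)
  then show "\<gamma> * (1 - \<gamma>) / real (N + 2) \<le> 9/4 * \<rho> * \<epsilon>^2" by (simp add: field_simps)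
qed

section \<open>Order statistics of independent samples\<close>

lemma sorted_nth_downclosed_iff:
  fixes L :: "'b :: linorder list"
  assumes sorted: "sorted L" and down: "\<And>a b. a \<le> b \<Longrightarrow> P b \<Longrightarrow> P a"
    and m: "1 \<le> m" "m \<le> length L"
  shows "P (L ! (m - 1)) \<longleftrightarrow> m \<le> length (filter P L)"
proof -
  define K where "K = {j. j < length L \<and> P (L ! j)}"
  have card_K: "length (filter P L) = card K" unfolding K_def by (rule length_filter_conv_card)
  have K_down: "j' \<in> K" if "j \<in> K" "j' \<le> j" for j j'
  proof -
    have "L ! j' \<le> L ! j" using that sorted by (auto simp: K_def intro: sorted_nth_mono)
    then show ?thesis using that down by (auto simp: K_def)
  qed
  show ?thesis
  proof
    assume "P (L ! (m - 1))"
    then have "m - 1 \<in> K" using m by (simp add: K_def)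
    then have "{0..m - 1} \<subseteq> K" using K_down by auto
    then have "card {0..m - 1} \<le> card K" by (intro card_mono) (auto simp: K_def)
    then show "m \<le> length (filter P L)" using m card_K by simp
  next
    assume "m \<le> length (filter P L)"
    then have "\<not> K \<subseteq> {0..<m - 1}" using m card_K card_mono[of "{0..<m - 1}" K] by auto
    then obtain j where j: "j \<in> K" "j \<notin> {0..<m - 1}" by blast
    then have "m - 1 \<in> K" using K_down[OF j(1), of "m - 1"] by simp
    then show "P (L ! (m - 1))" by (simp add: K_def)
  qed
qed

lemma order_stat_downclosed_iff:
  fixes x :: "nat \<Rightarrow> real" and P :: "real \<Rightarrow> bool"
  assumes "\<And>a b. a \<le> b \<Longrightarrow> P b \<Longrightarrow> P a" "1 \<le> m" "m \<le> N"
  shows "P (order_stat x N m) \<longleftrightarrow> m \<le> card {i\<in>{1..N}. P (x i)}"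
proof -
  have "length (filter P (sort (map x [1..<N+1]))) = length (filter P (map x [1..<N+1]))"
    by (metis mset_filter mset_sort size_mset)
  also have "\<dots> = length (filter (P \<circ> x) [1..<N+1])" unfolding filter_map length_map ..
  also have "\<dots> = card (set (filter (P \<circ> x) [1..<N+1]))"
    by (metis distinct_card distinct_filter distinct_upt)
  also have "set (filter (P \<circ> x) [1..<N+1]) = {i\<in>{1..N}. P (x i)}" by auto
  finally show ?thesis
    using sorted_nth_downclosed_iff[of "sort (map x [1..<N+1])" P m] assms
    by (simp add: order_stat_def)
qed

lemma (in real_distribution) measure_cdf_le:
  assumes cont: "continuous_on UNIV (cdf M)" and u: "0 < u" "u < 1"
  shows "measure M {x. cdf M x \<le> u} = u"
proof -
  define S where "S = {x. cdf M x \<le> u}"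
  obtain a where a: "\<And>x. x \<le> a \<Longrightarrow> cdf M x < u"
    using order_tendstoD(2)[OF cdf_lim_at_bot u(1)] by (auto simp: eventually_at_bot_linorder)
  obtain b where b: "\<And>x. b \<le> x \<Longrightarrow> u < cdf M x"
    using order_tendstoD(1)[OF cdf_lim_at_top_prob u(2)] by (auto simp: eventually_at_top_linorder)
  have "closed S" unfolding S_def using cont by (intro closed_Collect_le) auto
  moreover have "a \<in> S" using a[of a] by (simp add: S_def)
  moreover have S_lt_b: "x < b" if "x \<in> S" for x using b[of x] that by (force simp: S_def)
  then have "bdd_above S" by (meson bdd_aboveI less_imp_le)
  ultimately have "Sup S \<in> S" using closed_contains_Sup by blast
  define s where "s = Sup S"
  have S: "S = {..s}"
  proof (intro set_eqI iffI)
    show "x \<in> {..s}" if "x \<in> S" for x unfolding s_def using that \<open>bdd_above S\<close> by (auto intro: cSup_upper)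
    show "x \<in> S" if "x \<in> {..s}" for x
      using that \<open>Sup S \<in> S\<close> cdf_nondecreasing[of x s] by (auto simp: S_def s_def)
  qed
  have "cdf M s = u"
  proof -
    have "s < b" "cdf M s \<le> u" "u \<le> cdf M b" using S_lt_b \<open>Sup S \<in> S\<close> b[of b] by (auto simp: S_def s_def)
    moreover have "continuous_on {s..b} (cdf M)" using cont by (rule continuous_on_subset) auto
    ultimately obtain c where c: "s \<le> c" "cdf M c = u" using IVT'[of "cdf M" s u b] by auto
    then have "c \<in> S" by (simp add: S_def)
    with c S show ?thesis by auto
  qed
  then show ?thesis using S by (simp add: S_def cdf_def2)
qed

context prob_space
begin

lemma count_eq_event_eq_UN:
  fixes X :: "nat \<Rightarrow> 'a \<Rightarrow> real"
  assumes "finite I" "I \<noteq> {}"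
  shows "{\<omega>\<in>space M. card {i\<in>I. X i \<omega> \<in> B} = j} =
    (\<Union>S\<in>{S. S \<subseteq> I \<and> card S = j}. \<Inter>i\<in>I. X i -` (if i \<in> S then B else - B) \<inter> space M)"
proof (intro set_eqI iffI)
  fix \<omega> assume "\<omega> \<in> {\<omega>\<in>space M. card {i\<in>I. X i \<omega> \<in> B} = j}"
  then show "\<omega> \<in> (\<Union>S\<in>{S. S \<subseteq> I \<and> card S = j}. \<Inter>i\<in>I. X i -` (if i \<in> S then B else - B) \<inter> space M)"
    by (intro UN_I[of "{i\<in>I. X i \<omega> \<in> B}"]) auto
next
  fix \<omega> assume "\<omega> \<in> (\<Union>S\<in>{S. S \<subseteq> I \<and> card S = j}. \<Inter>i\<in>I. X i -` (if i \<in> S then B else - B) \<inter> space M)"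
  then obtain S where S: "S \<subseteq> I" "card S = j"
    and \<omega>: "\<omega> \<in> (\<Inter>i\<in>I. X i -` (if i \<in> S then B else - B) \<inter> space M)" by blast
  then have "{i\<in>I. X i \<omega> \<in> B} = S" by (force split: if_splits)
  then show "\<omega> \<in> {\<omega>\<in>space M. card {i\<in>I. X i \<omega> \<in> B} = j}" using \<omega> S assms(2) by auto
qed

lemma count_eq_sets:
  fixes X :: "nat \<Rightarrow> 'a \<Rightarrow> real"
  assumes "finite I" "I \<noteq> {}" "\<And>i. i \<in> I \<Longrightarrow> X i \<in> borel_measurable M" "B \<in> sets borel"
  shows "{\<omega>\<in>space M. card {i\<in>I. X i \<omega> \<in> B} = j} \<in> events"
  unfolding count_eq_event_eq_UN[OF assms(1,2)]
  using assms by (intro sets.finite_UN sets.finite_INT measurable_sets[of _ M borel]) auto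

lemma prob_count_eq:
  fixes X :: "nat \<Rightarrow> 'a \<Rightarrow> real"
  assumes indep: "indep_vars (\<lambda>_. borel) X I" and I: "finite I" "I \<noteq> {}" and B: "B \<in> sets borel"
    and p: "\<And>i. i \<in> I \<Longrightarrow> prob (X i -` B \<inter> space M) = p"
  shows "prob {\<omega>\<in>space M. card {i\<in>I. X i \<omega> \<in> B} = j} = real (card I choose j) * p^j * (1 - p)^(card I - j)"
proof -
  have meas: "X i \<in> borel_measurable M" if "i \<in> I" for i
    using indep that by (auto simp: indep_vars_def)
  define E where "E S = (\<Inter>i\<in>I. X i -` (if i \<in> S then B else - B) \<inter> space M)" for S
  have E_sets: "E S \<in> events" for S
    unfolding E_def using I meas B by (intro sets.finite_INT measurable_sets[of _ M borel]) auto
  have p_compl: "prob (X i -` (- B) \<inter> space M) = 1 - p" if "i \<in> I" for i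
  proof -
    have "X i -` (- B) \<inter> space M = space M - (X i -` B \<inter> space M)" by auto
    then show ?thesis using prob_compl measurable_sets[OF meas[OF that] B] p[OF that] by simp
  qed
  have prob_E: "prob (E S) = p ^ card S * (1 - p) ^ (card I - card S)" if S: "S \<subseteq> I" for S
  proof -
    have "prob (E S) = (\<Prod>i\<in>I. prob (X i -` (if i \<in> S then B else - B) \<inter> space M))"
      unfolding E_def using indep I B by (intro indep_varsD) auto
    also have "\<dots> = (\<Prod>i\<in>I. if i \<in> S then p else 1 - p)"
      using p p_compl by (intro prod.cong) auto
    also have "\<dots> = p ^ card S * (1 - p) ^ (card I - card S)"
      using S I by (simp add: prod.If_cases Int_absorb1 Diff_eq[symmetric] card_Diff_subset finite_subset)
    finally show ?thesis .
  qed
  have "disjoint_family_on E {S. S \<subseteq> I \<and> card S = j}"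
  proof (unfold disjoint_family_on_def, intro ballI impI)
    fix S T assume "S \<in> {S. S \<subseteq> I \<and> card S = j}" "T \<in> {S. S \<subseteq> I \<and> card S = j}" "S \<noteq> T"
    then obtain i where i: "i \<in> I" "i \<in> S \<longleftrightarrow> i \<notin> T" by blast
    have "\<omega> \<notin> E S \<inter> E T" for \<omega>
    proof
      assume "\<omega> \<in> E S \<inter> E T"
      then have "X i \<omega> \<in> (if i \<in> S then B else - B)" "X i \<omega> \<in> (if i \<in> T then B else - B)"
        using i(1) unfolding E_def by blast+
      then show False using i(2) by (auto split: if_splits)
    qed
    then show "E S \<inter> E T = {}" by blast
  qed
  then have "prob (\<Union>S\<in>{S. S \<subseteq> I \<and> card S = j}. E S) = (\<Sum>S\<in>{S. S \<subseteq> I \<and> card S = j}. prob (E S))"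
    using I E_sets by (intro finite_measure_finite_Union) auto
  also have "\<dots> = (\<Sum>S\<in>{S. S \<subseteq> I \<and> card S = j}. p ^ j * (1 - p) ^ (card I - j))"
    using prob_E by (intro sum.cong) auto
  also have "\<dots> = real (card I choose j) * (p ^ j * (1 - p) ^ (card I - j))"
    using n_subsets[OF I(1), of j] by simp
  finally show ?thesis unfolding count_eq_event_eq_UN[OF I] E_def by simp
qed

lemma count_ge_event_eq_UN:
  fixes X :: "nat \<Rightarrow> 'a \<Rightarrow> real"
  assumes "finite I"
  shows "{\<omega>\<in>space M. m \<le> card {i\<in>I. X i \<omega> \<in> B}} = (\<Union>j\<in>{m..card I}. {\<omega>\<in>space M. card {i\<in>I. X i \<omega> \<in> B} = j})"
  using assms card_mono[of I "{i\<in>I. X i _ \<in> B}"] by auto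

lemma count_ge_sets:
  fixes X :: "nat \<Rightarrow> 'a \<Rightarrow> real"
  assumes "finite I" "I \<noteq> {}" "\<And>i. i \<in> I \<Longrightarrow> X i \<in> borel_measurable M" "B \<in> sets borel"
  shows "{\<omega>\<in>space M. m \<le> card {i\<in>I. X i \<omega> \<in> B}} \<in> events"
  unfolding count_ge_event_eq_UN[OF assms(1)] using count_eq_sets[OF assms] by auto

lemma prob_count_ge:
  fixes X :: "nat \<Rightarrow> 'a \<Rightarrow> real"
  assumes indep: "indep_vars (\<lambda>_. borel) X I" and I: "finite I" "I \<noteq> {}" and B: "B \<in> sets borel"
    and p: "\<And>i. i \<in> I \<Longrightarrow> prob (X i -` B \<inter> space M) = p"
  shows "prob {\<omega>\<in>space M. m \<le> card {i\<in>I. X i \<omega> \<in> B}} = binom_tail (card I) m p"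
proof -
  have "X i \<in> borel_measurable M" if "i \<in> I" for i
    using indep that by (auto simp: indep_vars_def)
  then have "prob {\<omega>\<in>space M. m \<le> card {i\<in>I. X i \<omega> \<in> B}}
      = (\<Sum>j\<in>{m..card I}. prob {\<omega>\<in>space M. card {i\<in>I. X i \<omega> \<in> B} = j})"
    unfolding count_ge_event_eq_UN[OF I(1)] using count_eq_sets[OF I _ B]
    by (intro finite_measure_finite_Union) (auto simp: disjoint_family_on_def)
  also have "\<dots> = binom_tail (card I) m p"
    unfolding binom_tail_def using prob_count_eq[OF indep I B p] by (intro sum.cong) auto
  finally show ?thesis .
qed

end

locale continuous_iid_sample = prob_space M for M :: "'a measure" +
  fixes Y :: "'a \<Rightarrow> real" and X :: "nat \<Rightarrow> 'a \<Rightarrow> real" and N :: nat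
  assumes Y_measurable: "Y \<in> borel_measurable M"
    and cdf_continuous: "continuous_on UNIV (cdf (distr M borel Y))"
    and X_measurable: "\<And>i. i \<in> {1..N} \<Longrightarrow> X i \<in> borel_measurable M"
    and X_indep: "indep_vars (\<lambda>_. borel) X {1..N}"
    and X_distr: "\<And>i. i \<in> {1..N} \<Longrightarrow> distr M borel (X i) = distr M borel Y"
begin

abbreviation F_Y :: "real \<Rightarrow> real" where
  "F_Y \<equiv> cdf (distr M borel Y)"

sublocale Y_distr: real_distribution "distr M borel Y"
  using Y_measurable by simp

lemma order_stat_downclosed_event_eq:
  assumes "1 \<le> m" "m \<le> N" "\<And>a b. a \<le> b \<Longrightarrow> b \<in> D \<Longrightarrow> a \<in> D"
  shows "{\<omega>\<in>space M. order_stat (\<lambda>i. X i \<omega>) N m \<in> D}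
    = {\<omega>\<in>space M. m \<le> card {i\<in>{1..N}. X i \<omega> \<in> D}}"
proof -
  have "order_stat (\<lambda>i. X i \<omega>) N m \<in> D \<longleftrightarrow> m \<le> card {i\<in>{1..N}. X i \<omega> \<in> D}" for \<omega>
    by (rule order_stat_downclosed_iff[where P = "\<lambda>x. x \<in> D"]) (fact assms)+
  then show ?thesis by blast
qed

lemma order_stat_downclosed_sets:
  assumes "1 \<le> m" "m \<le> N" "\<And>a b. a \<le> b \<Longrightarrow> b \<in> D \<Longrightarrow> a \<in> D" "D \<in> sets borel"
  shows "{\<omega>\<in>space M. order_stat (\<lambda>i. X i \<omega>) N m \<in> D} \<in> events"
proof -
  have eq: "{\<omega>\<in>space M. order_stat (\<lambda>i. X i \<omega>) N m \<in> D} = {\<omega>\<in>space M. m \<le> card {i\<in>{1..N}. X i \<omega> \<in> D}}"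
    by (rule order_stat_downclosed_event_eq[OF assms(1-3)])
  have "{\<omega>\<in>space M. m \<le> card {i\<in>{1..N}. X i \<omega> \<in> D}} \<in> events"
    using assms(1,2,4) X_measurable by (intro count_ge_sets) auto
  then show ?thesis unfolding eq .
qed

lemma prob_order_stat_downclosed:
  assumes "1 \<le> m" "m \<le> N" "\<And>a b. a \<le> b \<Longrightarrow> b \<in> D \<Longrightarrow> a \<in> D" "D \<in> sets borel"
    and "\<And>i. i \<in> {1..N} \<Longrightarrow> prob (X i -` D \<inter> space M) = p"
  shows "prob {\<omega>\<in>space M. order_stat (\<lambda>i. X i \<omega>) N m \<in> D} = binom_tail N m p"
proof -
  have eq: "{\<omega>\<in>space M. order_stat (\<lambda>i. X i \<omega>) N m \<in> D} = {\<omega>\<in>space M. m \<le> card {i\<in>{1..N}. X i \<omega> \<in> D}}"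
    by (rule order_stat_downclosed_event_eq[OF assms(1-3)])
  show ?thesis
    unfolding eq using prob_count_ge[OF X_indep _ _ assms(4,5), of m] assms(1,2) by simp
qed

lemma F_Y_sublevel_sets: "{x. F_Y x \<le> u} \<in> sets borel" "{x. F_Y x < u} \<in> sets borel"
proof -
  have "F_Y \<in> borel_measurable borel" using cdf_continuous by (rule borel_measurable_continuous_onI)
  then have "F_Y -` {..u} \<inter> space borel \<in> sets borel" "F_Y -` {..<u} \<inter> space borel \<in> sets borel"
    by (rule measurable_sets, simp)+
  moreover have "F_Y -` {..u} \<inter> space borel = {x. F_Y x \<le> u}" "F_Y -` {..<u} \<inter> space borel = {x. F_Y x < u}"
    by auto
  ultimately show "{x. F_Y x \<le> u} \<in> sets borel" "{x. F_Y x < u} \<in> sets borel" by simp_all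
qed

lemma prob_F_Y_sample_le:
  assumes "i \<in> {1..N}" "0 < u" "u < 1"
  shows "prob (X i -` {x. F_Y x \<le> u} \<inter> space M) = u"
proof -
  have "prob (X i -` {x. F_Y x \<le> u} \<inter> space M) = measure (distr M borel (X i)) {x. F_Y x \<le> u}"
    using measure_distr[OF X_measurable[OF assms(1)] F_Y_sublevel_sets(1)] by simp
  also have "\<dots> = u"
    using Y_distr.measure_cdf_le[OF cdf_continuous assms(2,3)] X_distr[OF assms(1)] by simp
  finally show ?thesis .
qed

lemma F_Y_sublevel_downclosed:
  "a \<le> b \<Longrightarrow> b \<in> {x. F_Y x \<le> u} \<Longrightarrow> a \<in> {x. F_Y x \<le> u}"
  "a \<le> b \<Longrightarrow> b \<in> {x. F_Y x < u} \<Longrightarrow> a \<in> {x. F_Y x < u}"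
  using Y_distr.cdf_nondecreasing[of a b] by auto

lemma prob_F_Y_order_stat_le:
  assumes "1 \<le> m" "m \<le> N" "0 < u" "u < 1"
  shows "prob {\<omega>\<in>space M. F_Y (order_stat (\<lambda>i. X i \<omega>) N m) \<le> u} = binom_tail N m u"
proof -
  have "prob {\<omega>\<in>space M. order_stat (\<lambda>i. X i \<omega>) N m \<in> {x. F_Y x \<le> u}} = binom_tail N m u"
    using prob_F_Y_sample_le assms(3,4)
    by (intro prob_order_stat_downclosed[OF assms(1,2) F_Y_sublevel_downclosed(1) F_Y_sublevel_sets(1)])
  then show ?thesis by simp
qed

lemma prob_F_Y_order_stat_between:
  assumes m: "1 \<le> m" "m \<le> N" and "a < 1" "0 < b"
  shows "1 - ((if 0 < a then binom_tail N m a else 0) + (if b < 1 then 1 - binom_tail N m b else 0))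
    \<le> prob {\<omega>\<in>space M. a \<le> F_Y (order_stat (\<lambda>i. X i \<omega>) N m) \<and> F_Y (order_stat (\<lambda>i. X i \<omega>) N m) \<le> b}"
proof -
  define T where "T \<omega> = F_Y (order_stat (\<lambda>i. X i \<omega>) N m)" for \<omega>
  have "{\<omega>\<in>space M. order_stat (\<lambda>i. X i \<omega>) N m \<in> {x. F_Y x \<le> u}} \<in> events" for u
    by (rule order_stat_downclosed_sets[OF m F_Y_sublevel_downclosed(1) F_Y_sublevel_sets(1)])
  moreover have "{\<omega>\<in>space M. order_stat (\<lambda>i. X i \<omega>) N m \<in> {x. F_Y x < u}} \<in> events" for u
    by (rule order_stat_downclosed_sets[OF m F_Y_sublevel_downclosed(2) F_Y_sublevel_sets(2)])
  ultimately have sets: "{\<omega>\<in>space M. T \<omega> \<le> u} \<in> events" "{\<omega>\<in>space M. T \<omega> < u} \<in> events" for u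
    by (simp_all add: T_def)
  define L where "L = {\<omega>\<in>space M. T \<omega> < a}"
  define R where "R = space M - {\<omega>\<in>space M. T \<omega> \<le> b}"
  have "prob L \<le> (if 0 < a then binom_tail N m a else 0)"
  proof (cases "0 < a")
    case True
    have "prob L \<le> prob {\<omega>\<in>space M. T \<omega> \<le> a}"
      unfolding L_def using sets by (intro finite_measure_mono) auto
    then show ?thesis using prob_F_Y_order_stat_le[OF m True \<open>a < 1\<close>] True by (simp add: T_def)
  next
    case False
    then have "\<not> T \<omega> < a" for \<omega> using Y_distr.cdf_nonneg[of "order_stat (\<lambda>i. X i \<omega>) N m"]
      by (simp add: T_def)
    then have "L = {}" by (simp add: L_def)
    then show ?thesis using False by simp
  qed
  moreover have "prob R \<le> (if b < 1 then 1 - binom_tail N m b else 0)"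
  proof (cases "b < 1")
    case True
    have "prob R = 1 - prob {\<omega>\<in>space M. T \<omega> \<le> b}" unfolding R_def by (rule prob_compl[OF sets(1)])
    then show ?thesis using prob_F_Y_order_stat_le[OF m \<open>0 < b\<close> True] True by (simp add: T_def)
  next
    case False
    then have "T \<omega> \<le> b" for \<omega> using Y_distr.cdf_bounded_prob[of "order_stat (\<lambda>i. X i \<omega>) N m"]
      by (simp add: T_def)
    then have "R = {}" by (simp add: R_def)
    then show ?thesis using False by simp
  qed
  moreover have "L \<in> events" "R \<in> events" unfolding L_def R_def using sets by auto
  then have "prob (space M - (L \<union> R)) \<ge> 1 - (prob L + prob R)"
    using prob_compl[of "L \<union> R"] measure_subadditive[of L M R] by (simp add: emeasure_eq_measure)
  moreover have "space M - (L \<union> R) = {\<omega>\<in>space M. a \<le> T \<omega> \<and> T \<omega> \<le> b}"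
    by (auto simp: L_def R_def)
  ultimately show ?thesis by (simp add: T_def)
qed

end

theorem theorem1:
  fixes M :: "'a measure"
    and Y :: "'a \<Rightarrow> real"
    and X :: "nat \<Rightarrow> 'a \<Rightarrow> real"
    and F :: "real \<Rightarrow> real"
    and \<gamma> \<epsilon> \<rho> :: real
    and n1 n2 N :: nat
    and k :: int
  assumes "prob_space M"
    and "Y \<in> borel_measurable M"
    and F_def: "F = cdf (distr M borel Y)"
    and F_cont: "continuous_on UNIV F"
    and "0 < \<gamma>" "\<gamma> < 1"
    and "0 < n1" "0 < n2" "coprime n1 n2" "\<gamma> = real n1 / real n2"
    and "0 < \<epsilon>" "\<epsilon> < 1" "0 < \<rho>" "\<rho> < 1"
    and "4 * \<gamma> * (1 - \<gamma>) > 9 * \<rho> * \<epsilon>\<^sup>2"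
    and "6 * \<rho> \<le> 1"
    and k_def: "k = \<lceil>(1 / real n2) * ((4 * \<gamma> * (1 - \<gamma>)) / (9 * \<rho> * \<epsilon>\<^sup>2) - 1)\<rceil>"
    and N_def: "int N = k * int n2 - 1"
    and X_meas: "\<And>i. i \<in> {1..N} \<Longrightarrow> X i \<in> borel_measurable M"
    and X_indep: "prob_space.indep_vars M (\<lambda>_. borel) X {1..N}"
    and X_distr: "\<And>i. i \<in> {1..N} \<Longrightarrow> distr M borel (X i) = distr M borel Y"
  shows "measure M {\<omega> \<in> space M.
           \<bar>F (order_stat (\<lambda>i. X i \<omega>) N (nat \<lfloor>real N * \<gamma>\<rfloor> + 1)) - \<gamma>\<bar> \<le> \<epsilon>} \<ge> 1 - \<rho>"
proof -
  have "continuous_iid_sample M Y X N"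
    using assms(1,2) F_cont[unfolded F_def] X_meas X_indep X_distr
    unfolding continuous_iid_sample_def continuous_iid_sample_axioms_def by blast
  then interpret continuous_iid_sample M Y X N .
  define m where "m = nat \<lfloor>real N * \<gamma>\<rfloor> + 1"
  define \<sigma>2 where "\<sigma>2 = \<gamma> * (1 - \<gamma>) / real (N + 2)"
  define tails where "tails = (if 0 < \<gamma> - \<epsilon> then binom_tail N m (\<gamma> - \<epsilon>) else 0)
    + (if \<gamma> + \<epsilon> < 1 then 1 - binom_tail N m (\<gamma> + \<epsilon>) else 0)"
  obtain "1 \<le> k" and var: "\<sigma>2 \<le> 9/4 * \<rho> * \<epsilon>^2"
    using sample_size_variance[OF assms(8,11,13,15) k_def N_def] unfolding \<sigma>2_def by blast
  then have m: "1 \<le> m" "m \<le> N" "\<gamma> = real m / real (Suc N)"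
    using order_stat_index[OF assms(5,6,10) _ N_def] unfolding m_def by auto
  have "\<rho> * \<epsilon>^2 \<le> 1/6 * \<epsilon>^2" using assms(16) by (intro mult_right_mono) auto
  then have "\<sigma>2 \<le> 3/8 * \<epsilon>^2" using var by linarith
  then have "tails \<le> 4/9 * \<sigma>2 / \<epsilon>^2"
    using beta_central_tail_bound[OF m \<open>0 < \<epsilon>\<close>] unfolding tails_def \<sigma>2_def by simp
  also have "\<dots> \<le> \<rho>" using var \<open>0 < \<epsilon>\<close> by (simp add: field_simps)
  finally have "tails \<le> \<rho>" .
  moreover have "1 - tails \<le> measure M {\<omega>\<in>space M. \<gamma> - \<epsilon> \<le> F (order_stat (\<lambda>i. X i \<omega>) N m)
      \<and> F (order_stat (\<lambda>i. X i \<omega>) N m) \<le> \<gamma> + \<epsilon>}"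
    using prob_F_Y_order_stat_between[OF m(1,2), of "\<gamma> - \<epsilon>" "\<gamma> + \<epsilon>"] assms(5,6,11)
    unfolding tails_def F_def by simp
  ultimately show ?thesis unfolding m_def abs_diff_le_iff by linarith
qed

end
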